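(* Let $X$ be a Hausdorff topological space and $f:X\to X$ a continuous mapping. Suppose there exists $x_0\in X$ such that for each open cover $\mathcal{U}$ of $X$ there are $n\in\mathbb{N}_0$ and $U\in\mathcal{U}$ with $\{f^n(x_0),f^{n+1}(x_0)\}\subseteq U$. Then $f$ has a fixed point.
   Context: $\mathbb{N}_0=\{0,1,2,\dots\}$; $f^n$ denotes the $n$-fold iterate of $f$, with $f^0$ the identity. *)

theory Defs
  imports "HOL-Analysis.Analysis"
begin

end

theory Submission
  imports Defs
begin

text \<open>If \<open>f\<close> had no fixed point, every point \<open>x\<close> would have an open neighbourhood \<open>W\<close>
  disjoint from its image \<open>f ` W\<close> (separate \<open>x\<close> from \<open>f x\<close> and pull back the neighbourhood
  of \<open>f x\<close>). These neighbourhoods form an open cover, and no member of it can contain two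
  consecutive points \<open>y\<close>, \<open>f y\<close> of any orbit.\<close>

lemma Hausdorff_space_nbhd_disjnt_image:
  assumes "Hausdorff_space X" "continuous_map X X f" "x \<in> topspace X" "f x \<noteq> x"
  obtains W where "openin X W" "x \<in> W" "disjnt W (f ` W)"
proof -
  have "f x \<in> topspace X"
    using assms(2,3) by (auto simp: continuous_map_def)
  then obtain U V where UV: "openin X U" "openin X V" "x \<in> U" "f x \<in> V" "disjnt U V"
    using assms(1,3,4) unfolding Hausdorff_space_def by metis
  let ?W = "U \<inter> {y \<in> topspace X. f y \<in> V}"
  have "openin X ?W"
    using UV(1,2) assms(2) by (simp add: openin_Int continuous_map)
  moreover have "x \<in> ?W"
    using UV(3,4) assms(3) by simp
  moreover have "disjnt ?W (f ` ?W)"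
    using UV(5) by (auto simp: disjnt_def)
  ultimately show thesis
    using that by blast
qed

theorem theorem3:
  fixes X :: "'a topology" and f :: "'a \<Rightarrow> 'a" and x0 :: 'a
  assumes "Hausdorff_space X"
    and "continuous_map X X f"
    and "x0 \<in> topspace X"
    and "\<forall>\<U>. (\<forall>U\<in>\<U>. openin X U) \<and> topspace X \<subseteq> \<Union>\<U> \<longrightarrow>
           (\<exists>n::nat. \<exists>U\<in>\<U>. {(f ^^ n) x0, (f ^^ (Suc n)) x0} \<subseteq> U)"
  shows "\<exists>x\<in>topspace X. f x = x"
proof (rule ccontr)
  assume no_fixpoint: "\<not> (\<exists>x\<in>topspace X. f x = x)"
  have "\<exists>W. openin X W \<and> x \<in> W \<and> disjnt W (f ` W)" if "x \<in> topspace X" for x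
  proof -
    have "f x \<noteq> x"
      using no_fixpoint that by blast
    then show ?thesis
      using Hausdorff_space_nbhd_disjnt_image[OF assms(1,2) that] by blast
  qed
  then obtain W where W: "\<And>x. x \<in> topspace X \<Longrightarrow> openin X (W x) \<and> x \<in> W x \<and> disjnt (W x) (f ` W x)"
    by metis
  then have "(\<forall>U\<in>W ` topspace X. openin X U) \<and> topspace X \<subseteq> \<Union>(W ` topspace X)"
    by blast
  then obtain n U where "U \<in> W ` topspace X" "{(f ^^ n) x0, (f ^^ Suc n) x0} \<subseteq> U"
    using assms(4) by metis
  then obtain x where "x \<in> topspace X" "(f ^^ n) x0 \<in> W x" "f ((f ^^ n) x0) \<in> W x"
    by auto
  then show False
    using W by (meson disjnt_iff image_eqI)
qed

end
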